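(* Let $\mathcal{X},\mathcal{Y}$ be Hilbert spaces, $F:\mathcal{D}(F)\subset\mathcal{X}\to\mathcal{Y}$ an operator, $y\in\mathcal{Y}$ and $y^\delta\in\mathcal{Y}$ with $\|y-y^\delta\|\le\delta$. Assume: (a) $\Theta:\mathcal{X}\to(-\infty,\infty]$ is proper, weakly lower semi-continuous and $p$-convex for some $p>1$, i.e. there is $c_0>0$ with $D_\xi\Theta(\bar x,x)\ge c_0\|x-\bar x\|^p$ for all $\bar x\in\mathcal{D}(\Theta)$, $x\in\mathcal{D}(\partial\Theta)$, $\xi\in\partial\Theta(x)$; (b) there are $\rho>0$, $x_0\in\mathcal{X}$, $\xi_0\in\partial\Theta(x_0)$ with $B_{2\rho}(x_0)\subset\mathcal{D}(F)$, and $F(x)=y$ has a solution $x^*\in\mathcal{D}(\Theta)$ with $D_{\xi_0}\Theta(x^*,x_0)\le c_0\rho^p$; (c) $F$ is continuous and weakly closed on $\mathcal{D}(F)$; (d) there is a family of bounded linear operators $\{L(x):\mathcal{X}\to\mathcal{Y}\}_{x\in B_{2\rho}(x_0)\cap\mathcal{D}(\Theta)}$, with $x\mapsto L(x)$ continuous on $B_{2\rho}(x_0)\cap\mathcal{D}(\Theta)$, a number $0\le\eta<1$ with $\|F(x)-F(\bar x)-L(\bar x)(x-\bar x)\|<\eta\|F(x)-F(\bar x)\|$ for all $x,\bar x\in B_{2\rho}(x_0)\cap\mathcal{D}(\Theta)$, and $C_0>0$ with $\|L(x)\|\le C_0$ for all $x\in B_{2\rho}(x_0)$. Let $(\xi^\delta(t),x^\delta(t))$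 be the solution of $$\frac{d\xi^\delta(t)}{dt}=-L(x^\delta(t))^*(F(x^\delta(t))-y^\delta),\quad x^\delta(t)=\nabla\Theta^*(\xi^\delta(t)),\qquad \xi^\delta(0)=\xi_0,\ x^\delta(0)=x_0,$$ for $T>0$. Let $\hat x$ be any solution of $F(x)=y$ with $D_{\xi_0}\Theta(\hat x,x_0)\le c_0\rho^p$ and define $\varphi(T)=D_{\xi^\delta(T)}\Theta(\hat x,x^\delta(T))$. If $x^\delta(T)\in B_{2\rho}(x_0)$, then $\varphi$ is differentiable at $T$ and $$\varphi'(T)\le-(1-\eta)\|F(x^\delta(T))-y^\delta\|^2+\delta(1+\eta)\|F(x^\delta(T))-y^\delta\|.$$ In the case $\delta=0$ (so $y^\delta=y$, with solution denoted $(\xi(t),x(t))$), $$\int_0^\infty\|F(x(\tau))-y\|^2\,d\tau<\frac{1}{1-\eta}D_{\xi_0}\Theta(\hat x,x_0)\quad\text{and}\quad \lim_{T\to\infty}\|F(x(T))-y\|=0.$$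
   Context: $\partial\Theta$ is the subdifferential, $\mathcal{D}(\Theta)=\{x:\Theta(x)<\infty\}$, $\mathcal{D}(\partial\Theta)=\{x\in\mathcal{D}(\Theta):\partial\Theta(x)\ne\emptyset\}$, and $D_\xi\Theta(\bar x,x)=\Theta(\bar x)-\Theta(x)-\langle\xi,\bar x-x\rangle$ for $\xi\in\partial\Theta(x)$ is the Bregman distance. $\Theta^*$ is the Legendre–Fenchel conjugate of $\Theta$, $L(x)^*$ the adjoint, and $B_{2\rho}(x_0)$ the closed ball of radius $2\rho$ about $x_0$. *)

theory Defs
  imports "HOL-Analysis.Analysis"
begin

definition effdom :: "('a \<Rightarrow> ereal) \<Rightarrow> 'a set" where
  "effdom \<Theta> = {x. \<Theta> x < \<infinity>}"

definition subdiff :: "('a::real_inner \<Rightarrow> ereal) \<Rightarrow> 'a \<Rightarrow> 'a set" where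
  "subdiff \<Theta> x = {\<xi>. \<Theta> x < \<infinity> \<and> (\<forall>z. \<Theta> x + ereal (inner \<xi> (z - x)) \<le> \<Theta> z)}"

text \<open>Bregman distance D_xi Theta(xb, x) = Theta(xb) - Theta(x) - <xi, xb - x>
  (extended-real valued: equals +infinity when Theta(xb) = +infinity).\<close>
definition bregman :: "('a::real_inner \<Rightarrow> ereal) \<Rightarrow> 'a \<Rightarrow> 'a \<Rightarrow> 'a \<Rightarrow> ereal" where
  "bregman \<Theta> \<xi> xb x = \<Theta> xb - \<Theta> x - ereal (inner \<xi> (xb - x))"

definition conjugate :: "('a::real_inner \<Rightarrow> ereal) \<Rightarrow> 'a \<Rightarrow> ereal" where
  "conjugate \<Theta> \<xi> = (SUP x. ereal (inner \<xi> x) - \<Theta> x)"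

definition is_gradient :: "('a::real_inner \<Rightarrow> ereal) \<Rightarrow> 'a \<Rightarrow> 'a \<Rightarrow> bool" where
  "is_gradient g \<xi> x \<longleftrightarrow>
     (\<forall>\<^sub>F \<zeta> in nhds \<xi>. \<bar>g \<zeta>\<bar> \<noteq> \<infinity>) \<and>
     ((\<lambda>\<zeta>. real_of_ereal (g \<zeta>)) has_derivative (\<lambda>v. inner x v)) (at \<xi>)"

definition weakly_conv :: "(nat \<Rightarrow> 'a::real_inner) \<Rightarrow> 'a \<Rightarrow> bool" where
  "weakly_conv s l \<longleftrightarrow> (\<forall>z. (\<lambda>n. inner (s n) z) \<longlonglongrightarrow> inner l z)"

definition proper_fun :: "('a \<Rightarrow> ereal) \<Rightarrow> bool" where
  "proper_fun \<Theta> \<longleftrightarrow> (\<forall>x. \<Theta> x \<noteq> -\<infinity>) \<and> (\<exists>x. \<Theta> x < \<infinity>)"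

definition weakly_lsc :: "('a::real_inner \<Rightarrow> ereal) \<Rightarrow> bool" where
  "weakly_lsc \<Theta> \<longleftrightarrow> (\<forall>s l. weakly_conv s l \<longrightarrow> \<Theta> l \<le> liminf (\<lambda>n. \<Theta> (s n)))"

definition p_convex :: "('a::real_inner \<Rightarrow> ereal) \<Rightarrow> real \<Rightarrow> real \<Rightarrow> bool" where
  "p_convex \<Theta> p c0 \<longleftrightarrow>
     (\<forall>xb x \<xi>. xb \<in> effdom \<Theta> \<longrightarrow> \<xi> \<in> subdiff \<Theta> x \<longrightarrow>
        ereal (c0 * norm (x - xb) powr p) \<le> bregman \<Theta> \<xi> xb x)"

definition weakly_closed_on :: "'a set \<Rightarrow> ('a::real_inner \<Rightarrow> 'b::real_inner) \<Rightarrow> bool" where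
  "weakly_closed_on DF F \<longleftrightarrow>
     (\<forall>s l v. (\<forall>n. s n \<in> DF) \<longrightarrow> weakly_conv s l \<longrightarrow> weakly_conv (\<lambda>n. F (s n)) v
        \<longrightarrow> l \<in> DF \<and> F l = v)"

definition flow_solution ::
  "('a::real_inner \<Rightarrow> ereal) \<Rightarrow> 'a set \<Rightarrow> ('a \<Rightarrow> 'b::real_inner) \<Rightarrow> ('a \<Rightarrow> ('a \<Rightarrow>\<^sub>L 'b))
    \<Rightarrow> 'b \<Rightarrow> 'a \<Rightarrow> 'a \<Rightarrow> (real \<Rightarrow> 'a) \<Rightarrow> (real \<Rightarrow> 'a) \<Rightarrow> bool" where
  "flow_solution \<Theta> DF F L yd \<xi>0 x0 \<xi> x \<longleftrightarrow>
     \<xi> 0 = \<xi>0 \<and> x 0 = x0 \<and>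
     (\<forall>t\<ge>0. x t \<in> DF) \<and>
     (\<forall>t\<ge>0. is_gradient (conjugate \<Theta>) (\<xi> t) (x t)) \<and>
     (\<forall>t\<ge>0. (\<xi> has_vector_derivative
                 (- adjoint (blinfun_apply (L (x t))) (F (x t) - yd))) (at t within {0..}))"

end

theory Submission
  imports Defs
begin

(* Since x(t) = grad Theta^*(xi(t)), the Bregman distance phi(t) = D_xi(t) Theta(xhat, x(t)) equals
   Theta(xhat) + Theta^*(xi(t)) - <xi(t), xhat>, so it is differentiable with
   phi' = - <L(x)(x - xhat), F(x) - y_delta>; the tangential cone condition turns this into the
   stated bound. For exact data phi is therefore a Lyapunov function. A continuity argument keeps
   x(t) in B_2rho(x0): p-convexity turns phi(t) < phi(0) <= c0 rho^p into |x(t) - xhat| < rho, and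
   if instead the residual has vanished up to time t, then xi, and with it x, has not moved.
   Integrating phi' gives the L^2 bound on the residual. Finally, p-convexity makes x Hoelder
   continuous as a function of xi, which is Lipschitz, so the squared residual is uniformly
   continuous and Barbalat's lemma yields its convergence to 0. *)

section \<open>Riesz representation and adjoints\<close>

lemma inner_eq_0_if_norm_le_norm_add:
  fixes z v :: "'a::real_inner"
  assumes "\<And>t. norm z \<le> norm (z + t *\<^sub>R v)"
  shows "inner z v = 0"
proof (cases "v = 0")
  case False
  define t where "t = - inner z v / (norm v)\<^sup>2"
  have "(norm z)\<^sup>2 \<le> (norm (z + t *\<^sub>R v))\<^sup>2"
    using assms by (simp add: power_mono)
  also have "\<dots> = (norm z)\<^sup>2 + 2 * t * inner z v + t\<^sup>2 * (norm v)\<^sup>2"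
    unfolding power2_norm_eq_inner by (simp add: inner_commute power2_eq_square algebra_simps)
  also have "\<dots> = (norm z)\<^sup>2 - (inner z v)\<^sup>2 / (norm v)\<^sup>2"
    using False by (simp add: t_def power2_eq_square field_simps)
  finally show ?thesis using False by (simp add: divide_le_0_iff)
qed simp

lemma closed_convex_has_min_norm_element:
  fixes S :: "'a::{real_inner,complete_space} set"
  assumes "closed S" "convex S" "S \<noteq> {}"
  obtains z where "z \<in> S" "\<And>w. w \<in> S \<Longrightarrow> norm z \<le> norm w"
proof -
  define d where "d = Inf ((\<lambda>w. (norm w)\<^sup>2) ` S)"
  have bdd: "bdd_below ((\<lambda>w. (norm w)\<^sup>2) ` S)" by (rule bdd_belowI[of _ 0]) auto
  have d_le: "d \<le> (norm w)\<^sup>2" if "w \<in> S" for w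
    unfolding d_def using that bdd by (simp add: cInf_lower)
  have "\<exists>w\<in>S. (norm w)\<^sup>2 < d + 1 / (real n + 1)" for n
  proof -
    have "Inf ((\<lambda>w. (norm w)\<^sup>2) ` S) < d + 1 / (real n + 1)" unfolding d_def by simp
    then show ?thesis using \<open>S \<noteq> {}\<close> by (subst (asm) cInf_less_iff[OF _ bdd]) auto
  qed
  then obtain z where z_in: "\<And>n. z n \<in> S" and z_less: "\<And>n. (norm (z n))\<^sup>2 < d + 1 / (real n + 1)"
    by metis
  \<comment> \<open>The parallelogram law and convexity make every minimising sequence Cauchy.\<close>
  have dist_sq: "(norm (z n - z m))\<^sup>2 \<le> 2 / (real n + 1) + 2 / (real m + 1)" for n m
  proof -
    have "(1/2) *\<^sub>R z n + (1/2) *\<^sub>R z m \<in> S"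
      using z_in \<open>convex S\<close> by (simp add: convexD)
    then have "d \<le> (norm ((z n + z m) /\<^sub>R 2))\<^sup>2" by (intro d_le) (simp add: scaleR_add_right)
    moreover have "(norm (z n - z m))\<^sup>2 =
        2 * (norm (z n))\<^sup>2 + 2 * (norm (z m))\<^sup>2 - 4 * (norm ((z n + z m) /\<^sub>R 2))\<^sup>2"
      by (simp add: power2_norm_eq_inner inner_commute algebra_simps)
    ultimately show ?thesis using z_less[of n] z_less[of m] by linarith
  qed
  have "Cauchy z"
  proof (rule metric_CauchyI)
    fix e :: real assume e: "e > 0"
    obtain N :: nat where N: "4 / e\<^sup>2 < real N" using reals_Archimedean2 by blast
    have "dist (z n) (z m) < e" if "n \<ge> N" "m \<ge> N" for n m
    proof -
      have "2 / (real n + 1) \<le> 2 / (real N + 1)" "2 / (real m + 1) \<le> 2 / (real N + 1)"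
        using that by (auto intro!: divide_left_mono)
      moreover have "4 / (real N + 1) < e\<^sup>2"
        using N e by (simp add: field_simps) (smt (verit) mult_pos_pos power2_eq_square)
      ultimately have "2 / (real n + 1) + 2 / (real m + 1) < e\<^sup>2" by linarith
      then have "(norm (z n - z m))\<^sup>2 < e\<^sup>2" using dist_sq[of n m] by linarith
      then show ?thesis using e by (simp add: dist_norm power_less_imp_less_base)
    qed
    then show "\<exists>M. \<forall>m\<ge>M. \<forall>n\<ge>M. dist (z m) (z n) < e" by blast
  qed
  then obtain z0 where lim: "z \<longlonglongrightarrow> z0" using convergent_eq_Cauchy by blast
  show thesis
  proof
    show "z0 \<in> S" using closed_sequentially[OF \<open>closed S\<close>] z_in lim by blast
    have "(norm z0)\<^sup>2 \<le> d"
    proof (rule tendsto_le[OF trivial_limit_sequentially])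
      show "(\<lambda>n. (norm (z n))\<^sup>2) \<longlonglongrightarrow> (norm z0)\<^sup>2" by (intro tendsto_intros lim)
      show "(\<lambda>n. d + 1 / (real n + 1)) \<longlonglongrightarrow> d"
        using tendsto_add[OF tendsto_const LIMSEQ_inverse_real_of_nat, of d]
        by (simp add: inverse_eq_divide add.commute)
      show "\<forall>\<^sub>F n in sequentially. (norm (z n))\<^sup>2 \<le> d + 1 / (real n + 1)"
        using z_less by (simp add: less_imp_le)
    qed
    then show "norm z0 \<le> norm w" if "w \<in> S" for w
      using d_le[OF that] by (meson norm_ge_zero order.trans power2_le_imp_le)
  qed
qed

lemma riesz_representation:
  fixes f :: "'a::{real_inner,complete_space} \<Rightarrow> real"
  assumes "bounded_linear f"
  obtains w where "\<And>v. f v = inner v w"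
proof (cases "\<exists>a. f a \<noteq> 0")
  case True
  interpret f: bounded_linear f by fact
  obtain a where "f a \<noteq> 0" using True by blast
  have "closed {z. f z = 1}"
    by (rule closed_Collect_eq) (auto intro: f.continuous_on continuous_on_id)
  moreover have "convex {z. f z = 1}"
    by (rule convexI) (simp add: f.add f.scale)
  moreover have "(1 / f a) *\<^sub>R a \<in> {z. f z = 1}"
    using \<open>f a \<noteq> 0\<close> by (simp add: f.scale)
  then have "{z. f z = 1} \<noteq> {}" by blast
  ultimately obtain z where "z \<in> {z. f z = 1}"
    and z_min: "\<And>w. w \<in> {z. f z = 1} \<Longrightarrow> norm z \<le> norm w"
    by (rule closed_convex_has_min_norm_element) blast
  then have z: "f z = 1" by simp
  have orth: "inner z v = 0" if "f v = 0" for v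
    using that z by (intro inner_eq_0_if_norm_le_norm_add z_min) (simp add: f.add f.scale)
  have "f v = inner v ((1 / (norm z)\<^sup>2) *\<^sub>R z)" for v
  proof -
    have "inner z (v - f v *\<^sub>R z) = 0" using z by (intro orth) (simp add: f.diff f.scale)
    then have "inner v z = f v * (norm z)\<^sup>2"
      by (simp add: inner_diff_right inner_commute power2_norm_eq_inner)
    moreover have "z \<noteq> 0" using z f.zero by auto
    ultimately show ?thesis by simp
  qed
  then show thesis by (rule that)
next
  case False
  then show thesis by (intro that[of 0]) simp
qed

(* The adjoint of the library is defined by Hilbert choice; the Riesz representation theorem
   shows that an operator with the defining property exists. *)
lemma inner_blinfun_adjoint:
  fixes A :: "'a::{real_inner,complete_space} \<Rightarrow>\<^sub>L 'b::real_inner"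
  shows "inner (blinfun_apply A v) r = inner v (adjoint (blinfun_apply A) r)"
proof -
  have "\<exists>w. \<forall>v. inner (blinfun_apply A v) r = inner v w" for r
    using riesz_representation[of "\<lambda>v. inner (blinfun_apply A v) r"]
    by (metis bounded_linear_inner_left_comp blinfun.bounded_linear_right)
  then have "\<exists>g. \<forall>v r. inner (blinfun_apply A v) r = inner v (g r)" by metis
  then have "\<forall>v r. inner (blinfun_apply A v) r = inner v (adjoint (blinfun_apply A) r)"
    unfolding adjoint_def by (rule someI_ex)
  then show ?thesis by blast
qed

lemma norm_blinfun_adjoint_le:
  fixes A :: "'a::{real_inner,complete_space} \<Rightarrow>\<^sub>L 'b::real_inner"
  shows "norm (adjoint (blinfun_apply A) r) \<le> norm A * norm r"
proof -
  define w where "w = adjoint (blinfun_apply A) r"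
  have "norm w * norm w = inner (blinfun_apply A w) r"
    by (simp add: w_def inner_blinfun_adjoint flip: power2_eq_square power2_norm_eq_inner)
  also have "\<dots> \<le> norm A * norm w * norm r"
    by (meson norm_cauchy_schwarz norm_blinfun norm_ge_zero mult_right_mono order_trans)
  finally have "norm w * norm w \<le> (norm A * norm r) * norm w" by (simp add: algebra_simps)
  then show ?thesis unfolding w_def[symmetric]
    by (cases "norm w = 0") (auto simp: mult_le_cancel_right)
qed

section \<open>Conjugate, subdifferential and Bregman distance\<close>

lemma fenchel_young: "ereal (inner \<xi> z) - \<Theta> z \<le> conjugate \<Theta> \<xi>"
  unfolding conjugate_def by (rule SUP_upper) simp

lemma is_gradient_finite: "is_gradient g \<xi> x \<Longrightarrow> g \<xi> = ereal (real_of_ereal (g \<xi>))"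
  unfolding is_gradient_def by (auto dest!: eventually_nhds_x_imp_x simp: ereal_real)

lemma maximizing_sequence_tendsto_gradient_conjugate:
  fixes \<Theta> :: "'a::real_inner \<Rightarrow> ereal"
  assumes grad: "is_gradient (conjugate \<Theta>) \<xi> x"
    and conj_eq: "conjugate \<Theta> \<xi> = ereal c"
    and \<theta>: "\<And>n. \<Theta> (z n) = ereal (\<theta> n)"
    and near_max: "\<And>n. c - \<epsilon> n \<le> inner \<xi> (z n) - \<theta> n"
    and \<epsilon>: "\<epsilon> \<longlonglongrightarrow> 0"
  shows "z \<longlonglongrightarrow> x"
proof -
  let ?g = "\<lambda>\<zeta>. real_of_ereal (conjugate \<Theta> \<zeta>)"
  obtain r where r: "r > 0" "\<And>\<zeta>. dist \<zeta> \<xi> < r \<Longrightarrow> \<bar>conjugate \<Theta> \<zeta>\<bar> \<noteq> \<infinity>"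
    using grad unfolding is_gradient_def eventually_nhds_metric by blast
  have \<epsilon>_nonneg: "0 \<le> \<epsilon> n" for n
    using fenchel_young[of \<xi> "z n" \<Theta>] near_max[of n] by (simp add: conj_eq \<theta>)
  have bound: "\<exists>s>0. \<forall>n. norm (z n - x) \<le> e + \<epsilon> n / s" if "e > 0" for e
  proof -
    obtain d where d: "d > 0"
      "\<And>\<zeta>. norm (\<zeta> - \<xi>) < d \<Longrightarrow> norm (?g \<zeta> - ?g \<xi> - inner x (\<zeta> - \<xi>)) \<le> e * norm (\<zeta> - \<xi>)"
      using grad \<open>e > 0\<close> unfolding is_gradient_def has_derivative_at_alt by blast
    define s where "s = min d r / 2"
    have s: "0 < s" "s < d" "s < r" using d r by (auto simp: s_def)
    \<comment> \<open>Fenchel--Young at the perturbed point \<open>\<xi> + w\<close> against the first-order expansion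
      of the conjugate.\<close>
    have perturb: "inner w (z n - x) \<le> e * s + \<epsilon> n" if "norm w = s" for w n
    proof -
      have "ereal (inner (\<xi> + w) (z n) - \<theta> n) \<le> conjugate \<Theta> (\<xi> + w)"
        using fenchel_young[of "\<xi> + w" "z n" \<Theta>] by (simp add: \<theta>)
      also have "\<dots> = ereal (?g (\<xi> + w))"
        using r(2)[of "\<xi> + w"] that s by (simp add: dist_norm ereal_real)
      finally have "inner (\<xi> + w) (z n) - \<theta> n \<le> ?g (\<xi> + w)" by simp
      moreover have "?g (\<xi> + w) \<le> c + inner x w + e * s"
        using d(2)[of "\<xi> + w"] that s conj_eq by (simp add: abs_le_iff)
      ultimately show ?thesis
        using near_max[of n] unfolding inner_add_left inner_diff_right inner_commute[of x w]
        by linarith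
    qed
    have "norm (z n - x) \<le> e + \<epsilon> n / s" for n
    proof (cases "z n = x")
      case False
      have "s * norm (z n - x) = inner ((s / norm (z n - x)) *\<^sub>R (z n - x)) (z n - x)"
        using False by (simp add: power2_norm_eq_inner[symmetric] power2_eq_square)
      also have "\<dots> \<le> e * s + \<epsilon> n"
        using False s by (intro perturb) simp
      finally show ?thesis using s by (simp add: field_simps)
    qed (use \<open>e > 0\<close> s \<epsilon>_nonneg in auto)
    then show ?thesis using s by blast
  qed
  show ?thesis
  proof (rule LIM_zero_cancel, rule tendstoI)
    fix e :: real assume "e > 0"
    then obtain s where "s > 0" and s: "\<And>n. norm (z n - x) \<le> e / 2 + \<epsilon> n / s"
      using bound[of "e / 2"] by auto
    have "(\<lambda>n. \<epsilon> n / s) \<longlonglongrightarrow> 0" using tendsto_divide_zero[OF \<epsilon>] .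
    moreover have "(0::real) < e / 2" using \<open>e > 0\<close> by simp
    ultimately have "\<forall>\<^sub>F n in sequentially. \<epsilon> n / s < e / 2"
      by (rule order_tendstoD(2))
    then show "\<forall>\<^sub>F n in sequentially. dist (z n - x) 0 < e"
    proof eventually_elim
      case (elim n)
      then show ?case using s[of n] unfolding dist_norm diff_zero by linarith
    qed
  qed
qed

lemma is_gradient_conjugate_fenchel_young_eq:
  fixes \<Theta> :: "'a::real_inner \<Rightarrow> ereal"
  assumes proper: "proper_fun \<Theta>" and wlsc: "weakly_lsc \<Theta>"
    and grad: "is_gradient (conjugate \<Theta>) \<xi> x"
  shows "\<Theta> x = ereal (inner \<xi> x - real_of_ereal (conjugate \<Theta> \<xi>))"
proof -
  define c where "c = real_of_ereal (conjugate \<Theta> \<xi>)"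
  have conj_eq: "conjugate \<Theta> \<xi> = ereal c"
    using is_gradient_finite[OF grad] by (simp add: c_def)
  have not_minf: "\<Theta> z \<noteq> -\<infinity>" for z using proper by (simp add: proper_fun_def)
  have "\<exists>z. ereal (c - 1 / (real n + 1)) < ereal (inner \<xi> z) - \<Theta> z" for n
  proof -
    have "ereal (c - 1 / (real n + 1)) < conjugate \<Theta> \<xi>" using conj_eq by simp
    then show ?thesis unfolding conjugate_def by (subst (asm) less_SUP_iff) auto
  qed
  then obtain z where z: "\<And>n. ereal (c - 1 / (real n + 1)) < ereal (inner \<xi> (z n)) - \<Theta> (z n)"
    by metis
  define \<theta> where "\<theta> n = real_of_ereal (\<Theta> (z n))" for n
  have \<theta>: "\<Theta> (z n) = ereal (\<theta> n)" for n
    using z[of n] not_minf[of "z n"] unfolding \<theta>_def by (cases "\<Theta> (z n)") auto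
  have near_max: "c - 1 / (real n + 1) \<le> inner \<xi> (z n) - \<theta> n" for n
    using z[of n] by (simp add: \<theta>)
  have lim_inv: "(\<lambda>n. 1 / (real n + 1)) \<longlonglongrightarrow> 0"
    using LIMSEQ_inverse_real_of_nat by (simp add: inverse_eq_divide add.commute)
  have lim: "z \<longlonglongrightarrow> x"
    using maximizing_sequence_tendsto_gradient_conjugate[OF grad conj_eq \<theta> near_max lim_inv] .
  have "weakly_conv z x"
    unfolding weakly_conv_def by (intro allI tendsto_intros lim)
  then have "\<Theta> x \<le> liminf (\<lambda>n. \<Theta> (z n))"
    using wlsc by (simp add: weakly_lsc_def)
  also have "\<dots> \<le> liminf (\<lambda>n. ereal (inner \<xi> (z n) - c + 1 / (real n + 1)))"
    using near_max by (intro Liminf_mono always_eventually allI) (simp add: \<theta> algebra_simps)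
  also have "\<dots> = ereal (inner \<xi> x - c)"
    using tendsto_add[OF tendsto_diff[OF tendsto_inner[OF tendsto_const lim] tendsto_const] lim_inv]
    by (intro lim_imp_Liminf) simp_all
  finally have "\<Theta> x \<le> ereal (inner \<xi> x - c)" .
  moreover have "ereal (inner \<xi> x) - \<Theta> x \<le> ereal c"
    using fenchel_young[of \<xi> x \<Theta>] conj_eq by simp
  ultimately show ?thesis
    unfolding c_def[symmetric] using not_minf[of x] by (cases "\<Theta> x") auto
qed

lemma fenchel_young_eq_imp_subdiff:
  fixes \<Theta> :: "'a::real_inner \<Rightarrow> ereal"
  assumes "conjugate \<Theta> \<xi> = ereal c" and "\<Theta> x = ereal (inner \<xi> x - c)"
  shows "\<xi> \<in> subdiff \<Theta> x"
  unfolding subdiff_def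
proof (intro CollectI conjI allI)
  show "\<Theta> x < \<infinity>" using assms(2) by simp
  fix w
  have "ereal (inner \<xi> w) - \<Theta> w \<le> ereal c"
    using fenchel_young[of \<xi> w \<Theta>] assms(1) by simp
  then show "\<Theta> x + ereal (inner \<xi> (w - x)) \<le> \<Theta> w"
    using assms(2) by (cases "\<Theta> w") (auto simp: inner_diff_right)
qed

lemma is_gradient_conjugate_imp_subdiff:
  fixes \<Theta> :: "'a::real_inner \<Rightarrow> ereal"
  assumes "proper_fun \<Theta>" "weakly_lsc \<Theta>" "is_gradient (conjugate \<Theta>) \<xi> x"
  shows "\<xi> \<in> subdiff \<Theta> x"
  using is_gradient_finite[OF assms(3)] is_gradient_conjugate_fenchel_young_eq[OF assms]
  by (rule fenchel_young_eq_imp_subdiff)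

lemma bregman_is_gradient_conjugate:
  fixes \<Theta> :: "'a::real_inner \<Rightarrow> ereal"
  assumes "proper_fun \<Theta>" "weakly_lsc \<Theta>" "is_gradient (conjugate \<Theta>) \<xi> x"
    and "\<Theta> z = ereal \<theta>"
  shows "bregman \<Theta> \<xi> z x = ereal (\<theta> + real_of_ereal (conjugate \<Theta> \<xi>) - inner \<xi> z)"
  using assms(4) is_gradient_conjugate_fenchel_young_eq[OF assms(1-3)]
  by (simp add: bregman_def inner_diff_right)

lemma subdiff_finite:
  assumes "proper_fun \<Theta>" "\<xi> \<in> subdiff \<Theta> x"
  obtains a where "\<Theta> x = ereal a"
  using assms by (cases "\<Theta> x") (auto simp: proper_fun_def subdiff_def)

lemma bregman_le_imp_finite:
  assumes "proper_fun \<Theta>" "\<xi> \<in> subdiff \<Theta> x" "bregman \<Theta> \<xi> z x \<le> ereal r"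
  shows "\<Theta> z = ereal (real_of_ereal (\<Theta> z))"
proof -
  obtain a where "\<Theta> x = ereal a" using subdiff_finite[OF assms(1,2)] .
  then show ?thesis using assms(1,3) by (cases "\<Theta> z") (auto simp: bregman_def proper_fun_def)
qed

lemma p_convex_subdiff_holder:
  fixes \<Theta> :: "'a::real_inner \<Rightarrow> ereal"
  assumes "proper_fun \<Theta>" and pconv: "p_convex \<Theta> p c0" and "p > 1" "c0 > 0"
    and s: "\<xi>s \<in> subdiff \<Theta> xs" and t: "\<xi>t \<in> subdiff \<Theta> xt"
  shows "norm (xt - xs) \<le> (norm (\<xi>t - \<xi>s) / (2 * c0)) powr (1 / (p - 1))"
proof -
  obtain a b where a: "\<Theta> xs = ereal a" and b: "\<Theta> xt = ereal b"
    using subdiff_finite[OF \<open>proper_fun \<Theta>\<close>] s t by metis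
  define d where "d = norm (xt - xs)"
  define D where "D = norm (\<xi>t - \<xi>s)"
  \<comment> \<open>Adding the two \<open>p\<close>-convexity inequalities gives strong monotonicity of the subdifferential.\<close>
  have "ereal (c0 * norm (xs - xt) powr p) \<le> bregman \<Theta> \<xi>s xt xs"
    using pconv s b by (simp add: p_convex_def effdom_def)
  then have "c0 * d powr p \<le> b - a - inner \<xi>s (xt - xs)"
    by (simp add: bregman_def a b d_def norm_minus_commute)
  moreover have "ereal (c0 * norm (xt - xs) powr p) \<le> bregman \<Theta> \<xi>t xs xt"
    using pconv t a by (simp add: p_convex_def effdom_def)
  then have "c0 * d powr p \<le> a - b - inner \<xi>t (xs - xt)"
    by (simp add: bregman_def a b d_def)
  ultimately have "2 * c0 * d powr p \<le> inner (\<xi>t - \<xi>s) (xt - xs)"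
    by (simp add: algebra_simps)
  also have "\<dots> \<le> D * d" unfolding D_def d_def by (rule norm_cauchy_schwarz)
  finally have mono: "2 * c0 * d powr p \<le> D * d" .
  show ?thesis
  proof (cases "d = 0")
    case False
    then have "d > 0" by (simp add: d_def)
    then have "d powr p = d powr (p - 1) * d" using powr_add[of d "p - 1" 1] by simp
    with mono \<open>d > 0\<close> have "2 * c0 * d powr (p - 1) \<le> D" by simp
    then have "d powr (p - 1) \<le> D / (2 * c0)" using \<open>c0 > 0\<close> by (simp add: field_simps)
    then have "(d powr (p - 1)) powr (1 / (p - 1)) \<le> (D / (2 * c0)) powr (1 / (p - 1))"
      using \<open>p > 1\<close> by (intro powr_mono2) auto
    moreover have "(d powr (p - 1)) powr (1 / (p - 1)) = d"
      using \<open>d > 0\<close> \<open>p > 1\<close> by (simp add: powr_powr)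
    ultimately show ?thesis unfolding d_def D_def by simp
  qed (simp add: d_def)
qed

lemma p_convex_bregman_less_imp_norm_less:
  assumes "p_convex \<Theta> p c0" "c0 > 0" "p > 0" "r \<ge> 0"
    and "z \<in> effdom \<Theta>" "\<xi> \<in> subdiff \<Theta> x"
    and "bregman \<Theta> \<xi> z x < ereal (c0 * r powr p)"
  shows "norm (x - z) < r"
proof -
  have "ereal (c0 * norm (x - z) powr p) < ereal (c0 * r powr p)"
    using assms(1,5,6,7) unfolding p_convex_def by (meson le_less_trans)
  then have "norm (x - z) powr p < r powr p" using \<open>c0 > 0\<close> by simp
  then show ?thesis using \<open>p > 0\<close> \<open>r \<ge> 0\<close> by (meson powr_mono2 less_imp_le not_less)
qed

lemma p_convex_bregman_le_imp_norm_le: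
  assumes "p_convex \<Theta> p c0" "c0 > 0" "p > 0" "r \<ge> 0"
    and "z \<in> effdom \<Theta>" "\<xi> \<in> subdiff \<Theta> x"
    and "bregman \<Theta> \<xi> z x \<le> ereal (c0 * r powr p)"
  shows "norm (x - z) \<le> r"
proof -
  have "ereal (c0 * norm (x - z) powr p) \<le> ereal (c0 * r powr p)"
    using assms(1,5,6,7) unfolding p_convex_def by (meson order_trans)
  then have "norm (x - z) powr p \<le> r powr p" using \<open>c0 > 0\<close> by simp
  then show ?thesis using \<open>p > 0\<close> \<open>r \<ge> 0\<close> by (meson powr_less_mono2 not_le)
qed

section \<open>Real analysis on the half-line\<close>

lemma lipschitz_on_vector_derivative_bound:
  fixes f :: "real \<Rightarrow> 'b::real_normed_vector"
  assumes "convex S" and deriv: "\<And>t. t \<in> S \<Longrightarrow> (f has_vector_derivative f' t) (at t within S)"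
    and bound: "\<And>t. t \<in> S \<Longrightarrow> norm (f' t) \<le> B" and "0 \<le> B"
  shows "B-lipschitz_on S f"
proof (rule lipschitz_onI)
  fix s t assume "s \<in> S" "t \<in> S"
  have "norm (f s - f t) \<le> B * norm (s - t)"
  proof (rule differentiable_bound[OF \<open>convex S\<close> _ _ \<open>s \<in> S\<close> \<open>t \<in> S\<close>])
    show "(f has_derivative (\<lambda>h. h *\<^sub>R f' u)) (at u within S)" if "u \<in> S" for u
      using deriv[OF that] by (simp add: has_vector_derivative_def)
    show "onorm (\<lambda>h. h *\<^sub>R f' u) \<le> B" if "u \<in> S" for u
      using bound[OF that] onorm_scaleR_left[OF bounded_linear_ident, of "f' u"] onorm_id[where 'a=real]
      by simp
  qed
  then show "dist (f s) (f t) \<le> B * dist s t" by (simp add: dist_norm)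
qed (fact \<open>0 \<le> B\<close>)

lemma modulus_less_near_0:
  fixes \<omega> :: "real \<Rightarrow> real"
  assumes "(\<omega> \<longlongrightarrow> 0) (at_right 0)" "\<omega> 0 = 0" "e > 0"
  obtains d where "d > 0" "\<And>h. 0 \<le> h \<Longrightarrow> h < d \<Longrightarrow> \<omega> h < e"
proof -
  have "\<forall>\<^sub>F h in at_right 0. \<omega> h < e" using assms(1,3) by (rule order_tendstoD(2))
  then obtain d where "d > 0" "\<And>h. 0 < h \<Longrightarrow> h < d \<Longrightarrow> \<omega> h < e"
    unfolding eventually_at_right_field by auto
  then show thesis using assms(2,3) by (intro that[of d]) (auto simp: le_less)
qed

lemma uniformly_continuous_on_modulus:
  fixes f :: "'a::metric_space \<Rightarrow> 'b::metric_space" and g :: "'a \<Rightarrow> 'c::metric_space"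
    and \<omega> :: "real \<Rightarrow> real"
  assumes dominated: "\<And>s t. s \<in> S \<Longrightarrow> t \<in> S \<Longrightarrow> dist (f s) (f t) \<le> \<omega> (dist (g s) (g t))"
    and \<omega>: "(\<omega> \<longlongrightarrow> 0) (at_right 0)" "\<omega> 0 = 0"
    and "uniformly_continuous_on S g"
  shows "uniformly_continuous_on S f"
  unfolding uniformly_continuous_on_def
proof (intro allI impI)
  fix e :: real assume "e > 0"
  then obtain d where "d > 0" and d: "\<And>h. 0 \<le> h \<Longrightarrow> h < d \<Longrightarrow> \<omega> h < e"
    using modulus_less_near_0[OF \<omega>] by blast
  then obtain d' where "d' > 0" "\<forall>s\<in>S. \<forall>t\<in>S. dist t s < d' \<longrightarrow> dist (g t) (g s) < d"
    using \<open>uniformly_continuous_on S g\<close> unfolding uniformly_continuous_on_def by blast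
  then show "\<exists>d>0. \<forall>s\<in>S. \<forall>t\<in>S. dist t s < d \<longrightarrow> dist (f t) (f s) < e"
    using dominated d by (meson le_less_trans zero_le_dist)
qed

lemma continuous_on_modulus:
  fixes f :: "'a::metric_space \<Rightarrow> 'b::metric_space" and g :: "'a \<Rightarrow> 'c::metric_space"
    and \<omega> :: "real \<Rightarrow> real"
  assumes dominated: "\<And>s t. s \<in> S \<Longrightarrow> t \<in> S \<Longrightarrow> dist (f s) (f t) \<le> \<omega> (dist (g s) (g t))"
    and \<omega>: "(\<omega> \<longlongrightarrow> 0) (at_right 0)" "\<omega> 0 = 0"
    and "continuous_on S g"
  shows "continuous_on S f"
  unfolding continuous_on_iff
proof (intro ballI allI impI)
  fix s e assume "s \<in> S" "(e::real) > 0"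
  then obtain d where "d > 0" and d: "\<And>h. 0 \<le> h \<Longrightarrow> h < d \<Longrightarrow> \<omega> h < e"
    using modulus_less_near_0[OF \<omega>] by blast
  then obtain d' where "d' > 0" "\<forall>t\<in>S. dist t s < d' \<longrightarrow> dist (g t) (g s) < d"
    using \<open>continuous_on S g\<close> \<open>s \<in> S\<close> unfolding continuous_on_iff by blast
  then show "\<exists>d>0. \<forall>t\<in>S. dist t s < d \<longrightarrow> dist (f t) (f s) < e"
    using dominated d \<open>s \<in> S\<close> by (meson le_less_trans zero_le_dist)
qed

lemma uniformly_continuous_on_power2:
  fixes g :: "'a::metric_space \<Rightarrow> real"
  assumes "uniformly_continuous_on S g" and bounded: "\<And>t. t \<in> S \<Longrightarrow> \<bar>g t\<bar> \<le> M"
  shows "uniformly_continuous_on S (\<lambda>t. (g t)\<^sup>2)"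
proof (rule uniformly_continuous_on_compose[OF assms(1)])
  have "(2 * max M 0)-lipschitz_on (g ` S) power2"
  proof (rule lipschitz_onI)
    fix a b assume "a \<in> g ` S" "b \<in> g ` S"
    then have "\<bar>a\<bar> \<le> M" "\<bar>b\<bar> \<le> M" using bounded by auto
    then have "\<bar>a + b\<bar> \<le> 2 * max M 0" by arith
    then have "\<bar>a + b\<bar> * \<bar>a - b\<bar> \<le> 2 * max M 0 * \<bar>a - b\<bar>" by (simp add: mult_right_mono)
    then show "dist (a\<^sup>2) (b\<^sup>2) \<le> 2 * max M 0 * dist a b"
      by (simp add: dist_real_def power2_eq_square abs_mult[symmetric] algebra_simps)
  qed simp
  then show "uniformly_continuous_on (g ` S) power2" by (rule lipschitz_on_uniformly_continuous)
qed

lemma powr_modulus_tendsto_0: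
  fixes q c :: real
  assumes "q > 0" "c > 0"
  shows "((\<lambda>h. (h / c) powr q) \<longlongrightarrow> 0) (at_right 0)"
proof -
  have "((\<lambda>h. h / c) \<longlongrightarrow> 0) (at_right 0)"
    by (intro tendsto_divide_zero tendsto_ident_at)
  moreover have "\<forall>\<^sub>F h in at_right 0. 0 \<le> h / c"
    using \<open>c > 0\<close> by (auto simp: eventually_at_right_field intro!: exI[of _ 1])
  ultimately show ?thesis
    using tendsto_zero_powrI[of "\<lambda>h. h / c" "at_right 0" "\<lambda>_. q" q] \<open>q > 0\<close> by simp
qed

lemma continuous_on_halfline_stays_in:
  fixes x :: "real \<Rightarrow> 'a::topological_space"
  assumes cont: "continuous_on {0..} x" and "closed K" "open U" "U \<subseteq> K" "x 0 \<in> K"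
    and step: "\<And>s. 0 \<le> s \<Longrightarrow> x ` {0..s} \<subseteq> K \<Longrightarrow> x s \<in> U"
    and "0 \<le> t"
  shows "x t \<in> K"
proof (rule ccontr)
  assume "x t \<notin> K"
  define B where "B = {u. 0 \<le> u \<and> x u \<notin> K}"
  define s where "s = Inf B"
  have "t \<in> B" using \<open>x t \<notin> K\<close> \<open>0 \<le> t\<close> by (simp add: B_def)
  have bdd: "bdd_below B" by (rule bdd_belowI[of _ 0]) (auto simp: B_def)
  have "0 \<le> s" unfolding s_def using \<open>t \<in> B\<close> by (intro cInf_greatest) (auto simp: B_def)
  have s_le: "s \<le> u" if "u \<in> B" for u unfolding s_def using that bdd by (rule cInf_lower)
  \<comment> \<open>\<open>s\<close> is the first exit time; by closedness \<open>x\<close> is still in \<open>K\<close> at \<open>s\<close>, hence in \<open>U\<close>.\<close>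
  have "x ` {0..s} \<subseteq> K"
  proof -
    have "{0..<s} \<subseteq> {0..} \<inter> x -` K" using s_le by (force simp: B_def)
    moreover have "closed ({0..} \<inter> x -` K)"
      using continuous_closed_preimage[OF cont closed_atLeast \<open>closed K\<close>] .
    ultimately have "closure {0..<s} \<subseteq> {0..} \<inter> x -` K" by (rule closure_minimal)
    then show ?thesis using \<open>x 0 \<in> K\<close> \<open>0 \<le> s\<close> by (cases "s = 0") auto
  qed
  then have "x s \<in> U" using step \<open>0 \<le> s\<close> by blast
  then obtain A where "open A" "s \<in> A" and A: "\<And>u. u \<in> {0..} \<Longrightarrow> u \<in> A \<Longrightarrow> x u \<in> U"
    using cont \<open>open U\<close> \<open>0 \<le> s\<close> unfolding continuous_on_topological by (metis atLeast_iff)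
  then obtain d where "d > 0" and d: "\<And>u. dist u s < d \<Longrightarrow> u \<in> A"
    by (metis open_dist)
  have "s + d \<le> u" if "u \<in> B" for u
  proof (rule ccontr)
    assume "\<not> s + d \<le> u"
    then have "x u \<in> U" using A d s_le[OF that] that by (auto simp: B_def dist_real_def)
    then show False using that \<open>U \<subseteq> K\<close> by (auto simp: B_def)
  qed
  then have "s + d \<le> s" unfolding s_def using \<open>t \<in> B\<close> by (intro cInf_greatest) auto
  then show False using \<open>d > 0\<close> by simp
qed

lemma nn_integral_halfline_le:
  fixes G :: "real \<Rightarrow> real"
  assumes cont: "continuous_on {0..} G" and nonneg: "\<And>t. 0 \<le> t \<Longrightarrow> 0 \<le> G t"
    and bound: "\<And>T. 0 \<le> T \<Longrightarrow> integral {0..T} G \<le> B"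
  shows "(\<integral>\<^sup>+ t\<in>{0..}. ennreal (G t) \<partial>lborel) \<le> ennreal B"
proof -
  define f where "f n t = ennreal (G t) * indicator {0..real n} t" for n t
  have "incseq f"
    unfolding incseq_def le_fun_def f_def
    by (auto intro!: mult_left_mono simp: split: split_indicator)
  moreover have "f n \<in> borel_measurable lborel" for n
  proof -
    have "(\<lambda>t. indicator {0..real n} t *\<^sub>R G t) \<in> borel_measurable borel"
      by (rule borel_measurable_continuous_on_indicator) (auto intro: continuous_on_subset[OF cont])
    moreover have "f n = (\<lambda>t. ennreal (indicator {0..real n} t *\<^sub>R G t))"
      by (auto simp: f_def split: split_indicator)
    ultimately show ?thesis by simp
  qed
  ultimately have "(\<integral>\<^sup>+ t. (SUP n. f n t) \<partial>lborel) = (SUP n. integral\<^sup>N lborel (f n))"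
    by (rule nn_integral_monotone_convergence_SUP)
  moreover have "(SUP n. f n t) = ennreal (G t) * indicator {0..} t" for t
  proof (cases "0 \<le> t")
    case True
    obtain n :: nat where "t \<le> real n" using real_arch_simple by blast
    then have "f n t = ennreal (G t)" using True by (simp add: f_def)
    moreover have "f k t \<le> ennreal (G t)" for k by (simp add: f_def split: split_indicator)
    ultimately show ?thesis using True by (auto intro!: antisym SUP_least SUP_upper2[of n])
  qed (simp add: f_def)
  moreover have "integral\<^sup>N lborel (f n) = ennreal (integral {0..real n} G)" for n
    unfolding f_def
    by (rule nn_integral_has_integral_lebesgue'[OF _ integrable_integral])
      (auto intro!: nonneg integrable_continuous_interval continuous_on_subset[OF cont])
  ultimately have "(\<integral>\<^sup>+ t\<in>{0..}. ennreal (G t) \<partial>lborel) = (SUP n. ennreal (integral {0..real n} G))"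
    by simp
  also have "\<dots> \<le> ennreal B" by (intro SUP_least ennreal_leI bound) simp
  finally show ?thesis .
qed

lemma barbalat:
  fixes G :: "real \<Rightarrow> real"
  assumes uc: "uniformly_continuous_on {0..} G" and nonneg: "\<And>t. 0 \<le> t \<Longrightarrow> 0 \<le> G t"
    and bound: "\<And>T. 0 \<le> T \<Longrightarrow> integral {0..T} G \<le> B"
  shows "(G \<longlongrightarrow> 0) at_top"
proof (rule tendstoI, rule ccontr)
  fix e :: real assume "e > 0" and "\<not> (\<forall>\<^sub>F t in at_top. dist (G t) 0 < e)"
  then have often: "\<exists>t\<ge>T. e \<le> G t" if "0 \<le> T" for T
    using that nonneg unfolding eventually_at_top_linorder by (force simp: not_less)
  obtain d where "d > 0" and d: "\<And>s t. s \<in> {0..} \<Longrightarrow> t \<in> {0..} \<Longrightarrow> dist s t < d \<Longrightarrow> dist (G s) (G t) < e / 2"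
    using uc \<open>e > 0\<close> unfolding uniformly_continuous_on_def by (metis half_gt_zero)
  have int: "G integrable_on {a..b}" if "0 \<le> a" for a b
    using uniformly_continuous_imp_continuous[OF uc] that
    by (intro integrable_continuous_interval) (auto intro: continuous_on_subset)
  \<comment> \<open>Each time \<open>G\<close> reaches \<open>e\<close>, uniform continuity forces a fixed amount of area.\<close>
  have bump: "d / 2 * (e / 2) \<le> integral {t..t + d / 2} G" if "0 \<le> t" "e \<le> G t" for t
  proof -
    have "e / 2 \<le> G u" if "u \<in> {t..t + d / 2}" for u
    proof -
      have "\<bar>G u - G t\<bar> < e / 2"
        using d[of u t] that \<open>0 \<le> t\<close> \<open>d > 0\<close> by (simp add: dist_real_def)
      then show ?thesis using \<open>e \<le> G t\<close> by arith
    qed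
    then have "integral {t..t + d / 2} (\<lambda>_. e / 2) \<le> integral {t..t + d / 2} G"
      by (intro integral_le int) (use that in auto)
    then show ?thesis using \<open>d > 0\<close> by simp
  qed
  have grow: "\<exists>T\<ge>0. real k * (d / 2 * (e / 2)) \<le> integral {0..T} G" for k
  proof (induction k)
    case (Suc k)
    then obtain T where "0 \<le> T" and T: "real k * (d / 2 * (e / 2)) \<le> integral {0..T} G" by blast
    then obtain t where "T \<le> t" "e \<le> G t" using often by blast
    have "integral {0..T} G \<le> integral {0..t} G"
      using Henstock_Kurzweil_Integration.integral_combine[OF _ _ int[of 0 t], of T] integral_nonneg[OF int[of T t]] \<open>0 \<le> T\<close> \<open>T \<le> t\<close> nonneg
      by auto
    moreover have "integral {0..t + d / 2} G = integral {0..t} G + integral {t..t + d / 2} G"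
      using Henstock_Kurzweil_Integration.integral_combine[OF _ _ int[of 0 "t + d / 2"], of t] \<open>0 \<le> T\<close> \<open>T \<le> t\<close> \<open>d > 0\<close> by simp
    ultimately have "real (Suc k) * (d / 2 * (e / 2)) \<le> integral {0..t + d / 2} G"
      using T bump[of t] \<open>0 \<le> T\<close> \<open>T \<le> t\<close> \<open>e \<le> G t\<close> by (simp add: algebra_simps)
    then show ?case using \<open>0 \<le> T\<close> \<open>T \<le> t\<close> \<open>d > 0\<close> by (intro exI[of _ "t + d / 2"]) auto
  qed (auto intro: exI[of _ 0])
  obtain k :: nat where k: "B / (d / 2 * (e / 2)) < real k" using reals_Archimedean2 by blast
  obtain T where "0 \<le> T" "real k * (d / 2 * (e / 2)) \<le> integral {0..T} G" using grow by blast
  moreover have "B < real k * (d / 2 * (e / 2))" using k \<open>d > 0\<close> \<open>e > 0\<close> by (simp add: field_simps)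
  ultimately show False using bound by force
qed

section \<open>The Bregman distance along the flow\<close>

lemma flow_bregman_has_derivative:
  fixes \<Theta> :: "'a::{real_inner,complete_space} \<Rightarrow> ereal"
    and F :: "'a \<Rightarrow> 'b::{real_inner,complete_space}"
  assumes proper: "proper_fun \<Theta>" and wlsc: "weakly_lsc \<Theta>"
    and flow: "flow_solution \<Theta> DF F L yd \<xi>0 x0 \<xi> x"
    and "T > 0" and \<theta>: "\<Theta> z = ereal \<theta>"
  shows "((\<lambda>t. real_of_ereal (bregman \<Theta> (\<xi> t) z (x t))) has_real_derivative
           - inner (blinfun_apply (L (x T)) (x T - z)) (F (x T) - yd)) (at T)"
proof -
  let ?conj = "\<lambda>\<zeta>. real_of_ereal (conjugate \<Theta> \<zeta>)"
  define \<xi>' where "\<xi>' = - adjoint (blinfun_apply (L (x T))) (F (x T) - yd)"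
  have grad: "\<And>t. t \<ge> 0 \<Longrightarrow> is_gradient (conjugate \<Theta>) (\<xi> t) (x t)"
    using flow by (simp add: flow_solution_def)
  have "(\<xi> has_vector_derivative \<xi>') (at T within {0..})"
    using flow \<open>T > 0\<close> by (simp add: flow_solution_def \<xi>'_def)
  then have d\<xi>: "(\<xi> has_derivative (\<lambda>h. h *\<^sub>R \<xi>')) (at T)"
    using \<open>T > 0\<close> at_within_interior[of T "{0..}"] by (simp add: has_vector_derivative_def)
  have dconj: "(?conj has_derivative inner (x T)) (at (\<xi> T))"
    using grad[of T] \<open>T > 0\<close> by (simp add: is_gradient_def)
  have "((\<lambda>t. \<theta> + ?conj (\<xi> t) - inner (\<xi> t) z) has_derivative
      (\<lambda>h. 0 + inner (x T) (h *\<^sub>R \<xi>') - inner (h *\<^sub>R \<xi>') z)) (at T)"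
    by (intro derivative_intros has_derivative_compose[OF d\<xi> dconj]
        bounded_linear.has_derivative[OF bounded_linear_inner_left d\<xi>])
  moreover have
    "(\<lambda>h. 0 + inner (x T) (h *\<^sub>R \<xi>') - inner (h *\<^sub>R \<xi>') z) = (*) (inner (x T - z) \<xi>')"
    by (rule ext) (simp add: inner_commute algebra_simps)
  ultimately have "((\<lambda>t. \<theta> + ?conj (\<xi> t) - inner (\<xi> t) z) has_real_derivative inner (x T - z) \<xi>') (at T)"
    by (simp add: has_field_derivative_def)
  then have "((\<lambda>t. real_of_ereal (bregman \<Theta> (\<xi> t) z (x t))) has_real_derivative inner (x T - z) \<xi>') (at T)"
    by (rule has_field_derivative_transform_within_open[where S = "{0<..}"])
      (use \<open>T > 0\<close> bregman_is_gradient_conjugate[OF proper wlsc grad \<theta>] in auto)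
  then show ?thesis by (simp add: \<xi>'_def inner_blinfun_adjoint)
qed

lemma neg_inner_residual_le:
  fixes r u e :: "'b::real_inner"
  assumes "norm u \<le> \<delta>" "norm e \<le> \<eta> * norm (r + u)" "0 \<le> \<eta>"
  shows "- inner (r + u + e) r \<le> - (1 - \<eta>) * (norm r)\<^sup>2 + \<delta> * (1 + \<eta>) * norm r"
proof -
  have "- inner u r \<le> \<delta> * norm r"
    using norm_cauchy_schwarz[of "- u" r] assms(1) by (simp add: mult_right_mono order_trans)
  moreover have "- inner e r \<le> \<eta> * (norm r + \<delta>) * norm r"
  proof -
    have "norm e \<le> \<eta> * (norm r + \<delta>)"
      using assms norm_triangle_ineq[of r u] by (smt (verit) mult_left_mono)
    then show ?thesis
      using norm_cauchy_schwarz[of "- e" r] by (simp add: mult_right_mono order_trans)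
  qed
  moreover have "- inner (r + u + e) r = - (norm r)\<^sup>2 - inner u r - inner e r"
    by (simp add: inner_add_left power2_norm_eq_inner)
  ultimately show ?thesis by (simp add: algebra_simps power2_eq_square)
qed

lemma flow_bregman_derivative_le:
  fixes \<Theta> :: "'a::{real_inner,complete_space} \<Rightarrow> ereal"
    and F :: "'a \<Rightarrow> 'b::{real_inner,complete_space}"
  assumes "proper_fun \<Theta>" "weakly_lsc \<Theta>"
    and flow: "flow_solution \<Theta> DF F L yd \<xi>0 x0 \<xi> x"
    and "T > 0" and \<theta>: "\<Theta> z = ereal \<theta>" and "F z = y"
    and "norm (y - yd) \<le> \<delta>" and "0 \<le> \<eta>"
    and tangential: "norm (F z - F (x T) - blinfun_apply (L (x T)) (z - x T)) \<le> \<eta> * norm (F z - F (x T))"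
  shows "\<exists>D. ((\<lambda>t. real_of_ereal (bregman \<Theta> (\<xi> t) z (x t))) has_real_derivative D) (at T) \<and>
             D \<le> - (1 - \<eta>) * (norm (F (x T) - yd))\<^sup>2 + \<delta> * (1 + \<eta>) * norm (F (x T) - yd)"
proof (intro exI conjI)
  show "((\<lambda>t. real_of_ereal (bregman \<Theta> (\<xi> t) z (x t))) has_real_derivative
           - inner (blinfun_apply (L (x T)) (x T - z)) (F (x T) - yd)) (at T)"
    using flow_bregman_has_derivative[OF assms(1-4) \<theta>] .
  define e where "e = F z - F (x T) - blinfun_apply (L (x T)) (z - x T)"
  have "blinfun_apply (L (x T)) (x T - z) = (F (x T) - yd) + (yd - y) + e"
    using \<open>F z = y\<close> by (simp add: e_def blinfun.diff_right)
  moreover have "norm e \<le> \<eta> * norm ((F (x T) - yd) + (yd - y))"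
    using tangential \<open>F z = y\<close> by (simp add: e_def norm_minus_commute)
  ultimately show "- inner (blinfun_apply (L (x T)) (x T - z)) (F (x T) - yd)
      \<le> - (1 - \<eta>) * (norm (F (x T) - yd))\<^sup>2 + \<delta> * (1 + \<eta>) * norm (F (x T) - yd)"
    using neg_inner_residual_le \<open>norm (y - yd) \<le> \<delta>\<close> \<open>0 \<le> \<eta>\<close>
    by (metis norm_minus_commute)
qed

lemma tangential_cone_lipschitz_on:
  fixes F :: "'a::real_normed_vector \<Rightarrow> 'b::real_normed_vector" and L :: "'a \<Rightarrow> 'a \<Rightarrow>\<^sub>L 'b"
  assumes tangential: "\<And>x xb. x \<in> S \<Longrightarrow> xb \<in> S \<Longrightarrow>
      norm (F x - F xb - blinfun_apply (L xb) (x - xb)) \<le> \<eta> * norm (F x - F xb)"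
    and "\<eta> < 1" and L_bound: "\<And>x. x \<in> S \<Longrightarrow> norm (L x) \<le> C" and "0 \<le> C"
  shows "(C / (1 - \<eta>))-lipschitz_on S F"
proof (rule lipschitz_onI)
  fix x xb assume "x \<in> S" "xb \<in> S"
  have "norm (F x - F xb) \<le> norm (blinfun_apply (L xb) (x - xb)) + \<eta> * norm (F x - F xb)"
    using tangential[OF \<open>x \<in> S\<close> \<open>xb \<in> S\<close>] norm_triangle_sub[of "F x - F xb" "blinfun_apply (L xb) (x - xb)"]
    by linarith
  moreover have "norm (blinfun_apply (L xb) (x - xb)) \<le> C * norm (x - xb)"
    using norm_blinfun[of "L xb" "x - xb"] L_bound[OF \<open>xb \<in> S\<close>]
    by (meson mult_right_mono norm_ge_zero order_trans)
  ultimately have "(1 - \<eta>) * norm (F x - F xb) \<le> C * norm (x - xb)" by (simp add: algebra_simps)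
  then show "dist (F x) (F xb) \<le> C / (1 - \<eta>) * dist x xb"
    using \<open>\<eta> < 1\<close> by (simp add: dist_norm field_simps)
qed (use \<open>0 \<le> C\<close> \<open>\<eta> < 1\<close> in simp)

locale landweber_setting =
  fixes \<Theta> :: "'a::{real_inner,complete_space} \<Rightarrow> ereal"
    and F :: "'a \<Rightarrow> 'b::{real_inner,complete_space}"
    and L :: "'a \<Rightarrow> ('a \<Rightarrow>\<^sub>L 'b)"
    and y :: 'b
    and p c0 \<rho> \<eta> C0 :: real
    and x0 \<xi>0 xhat :: 'a
  assumes proper: "proper_fun \<Theta>" and wlsc: "weakly_lsc \<Theta>" and pconv: "p_convex \<Theta> p c0"
    and p: "p > 1" and c0: "c0 > 0" and rho: "\<rho> > 0"
    and eta: "0 \<le> \<eta>" "\<eta> < 1"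
    and tangential: "\<And>x xb. x \<in> cball x0 (2 * \<rho>) \<inter> effdom \<Theta> \<Longrightarrow> xb \<in> cball x0 (2 * \<rho>) \<inter> effdom \<Theta> \<Longrightarrow>
      norm (F x - F xb - blinfun_apply (L xb) (x - xb)) \<le> \<eta> * norm (F x - F xb)"
    and L_bound: "C0 > 0" "\<And>x. x \<in> cball x0 (2 * \<rho>) \<Longrightarrow> norm (L x) \<le> C0"
    and xi0: "\<xi>0 \<in> subdiff \<Theta> x0"
    and xhat: "F xhat = y" "bregman \<Theta> \<xi>0 xhat x0 \<le> ereal (c0 * \<rho> powr p)"
begin

lemma Theta_xhat: "\<Theta> xhat = ereal (real_of_ereal (\<Theta> xhat))"
  using bregman_le_imp_finite[OF proper xi0 xhat(2)] .

lemma xhat_effdom: "xhat \<in> effdom \<Theta>"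
proof -
  have "\<Theta> xhat < \<infinity>" by (subst Theta_xhat) simp
  then show ?thesis by (simp add: effdom_def)
qed

lemma norm_x0_xhat_le: "norm (x0 - xhat) \<le> \<rho>"
  using p_convex_bregman_le_imp_norm_le[OF pconv c0 _ _ xhat_effdom xi0 xhat(2)] p rho by simp

lemma xhat_in_ball: "xhat \<in> cball x0 (2 * \<rho>)"
  using norm_x0_xhat_le rho by (simp add: dist_norm)

lemma F_lipschitz: "(C0 / (1 - \<eta>))-lipschitz_on (cball x0 (2 * \<rho>) \<inter> effdom \<Theta>) F"
  using tangential eta(2) L_bound by (intro tangential_cone_lipschitz_on) auto

lemma bregman_flow_derivative_le:
  assumes "norm (y - yd) \<le> \<delta>" and flow: "flow_solution \<Theta> DF F L yd \<xi>0 x0 \<xi> x"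
    and "T > 0" "x T \<in> cball x0 (2 * \<rho>)"
  shows "\<exists>D. ((\<lambda>t. real_of_ereal (bregman \<Theta> (\<xi> t) xhat (x t))) has_real_derivative D) (at T) \<and>
             D \<le> - (1 - \<eta>) * (norm (F (x T) - yd))\<^sup>2 + \<delta> * (1 + \<eta>) * norm (F (x T) - yd)"
proof (rule flow_bregman_derivative_le[OF proper wlsc flow \<open>T > 0\<close> Theta_xhat xhat(1) assms(1) eta(1)])
  have "is_gradient (conjugate \<Theta>) (\<xi> T) (x T)"
    using flow \<open>T > 0\<close> by (simp add: flow_solution_def)
  then have "x T \<in> effdom \<Theta>"
    using is_gradient_conjugate_fenchel_young_eq[OF proper wlsc] by (simp add: effdom_def)
  then show "norm (F xhat - F (x T) - blinfun_apply (L (x T)) (xhat - x T)) \<le> \<eta> * norm (F xhat - F (x T))"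
    using tangential xhat_in_ball xhat_effdom \<open>x T \<in> cball x0 (2 * \<rho>)\<close> by blast
qed

end

section \<open>Exact data\<close>

locale exact_flow = landweber_setting +
  fixes DF and \<xi> x
  assumes F_cont: "continuous_on DF F" and flow: "flow_solution \<Theta> DF F L y \<xi>0 x0 \<xi> x"
begin

definition \<phi> :: "real \<Rightarrow> real" where "\<phi> t = real_of_ereal (bregman \<Theta> (\<xi> t) xhat (x t))"

definition residual :: "real \<Rightarrow> real" where "residual t = norm (F (x t) - y)"

lemma flow_start: "x 0 = x0" "\<xi> 0 = \<xi>0"
  using flow by (simp_all add: flow_solution_def)

lemma flow_in_DF: "0 \<le> t \<Longrightarrow> x t \<in> DF"
  using flow by (simp add: flow_solution_def)

lemma flow_gradient: "0 \<le> t \<Longrightarrow> is_gradient (conjugate \<Theta>) (\<xi> t) (x t)"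
  using flow by (simp add: flow_solution_def)

lemma flow_derivative:
  "0 \<le> t \<Longrightarrow> (\<xi> has_vector_derivative - adjoint (blinfun_apply (L (x t))) (F (x t) - y)) (at t within {0..})"
  using flow by (simp add: flow_solution_def)

lemma flow_subdiff: "0 \<le> t \<Longrightarrow> \<xi> t \<in> subdiff \<Theta> (x t)"
  using is_gradient_conjugate_imp_subdiff[OF proper wlsc flow_gradient] .

lemma flow_effdom: "0 \<le> t \<Longrightarrow> x t \<in> effdom \<Theta>"
  using is_gradient_conjugate_fenchel_young_eq[OF proper wlsc flow_gradient] by (simp add: effdom_def)

lemma \<phi>_conjugate_eq:
  "0 \<le> t \<Longrightarrow> \<phi> t = real_of_ereal (\<Theta> xhat) + real_of_ereal (conjugate \<Theta> (\<xi> t)) - inner (\<xi> t) xhat"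
  unfolding \<phi>_def using bregman_is_gradient_conjugate[OF proper wlsc flow_gradient Theta_xhat] by simp

lemma bregman_flow: "0 \<le> t \<Longrightarrow> bregman \<Theta> (\<xi> t) xhat (x t) = ereal (\<phi> t)"
  using bregman_is_gradient_conjugate[OF proper wlsc flow_gradient Theta_xhat] \<phi>_conjugate_eq by simp

lemma \<phi>_nonneg:
  assumes "0 \<le> t"
  shows "0 \<le> \<phi> t"
proof -
  have "ereal (c0 * norm (x t - xhat) powr p) \<le> bregman \<Theta> (\<xi> t) xhat (x t)"
    using pconv xhat_effdom flow_subdiff[OF assms] by (simp add: p_convex_def)
  then have "c0 * norm (x t - xhat) powr p \<le> \<phi> t" by (simp add: bregman_flow[OF assms])
  then show ?thesis using c0 by (meson order_trans mult_nonneg_nonneg less_imp_le powr_ge_zero)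
qed

lemma \<phi>_start: "\<phi> 0 = real_of_ereal (bregman \<Theta> \<xi>0 xhat x0)"
  by (simp add: \<phi>_def flow_start)

lemma xi_continuous: "continuous_on {0..} \<xi>"
  unfolding continuous_on_eq_continuous_within
  using flow_derivative by (auto intro: has_vector_derivative_continuous)

lemma flow_holder:
  "s \<in> {0..} \<Longrightarrow> t \<in> {0..} \<Longrightarrow> dist (x s) (x t) \<le> (dist (\<xi> s) (\<xi> t) / (2 * c0)) powr (1 / (p - 1))"
  using p_convex_subdiff_holder[OF proper pconv p c0 flow_subdiff flow_subdiff, of t s]
  by (simp add: dist_norm)

lemma holder_modulus:
  "((\<lambda>h. (h / (2 * c0)) powr (1 / (p - 1))) \<longlongrightarrow> 0) (at_right 0)" "(0 / (2 * c0)) powr (1 / (p - 1)) = 0"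
  using powr_modulus_tendsto_0[of "1 / (p - 1)" "2 * c0"] p c0 by simp_all

lemma x_continuous: "continuous_on {0..} x"
  using flow_holder holder_modulus xi_continuous by (rule continuous_on_modulus)

lemma \<phi>_continuous: "continuous_on {0..} \<phi>"
proof -
  have "continuous_on {0..} (\<lambda>t. real_of_ereal (conjugate \<Theta> (\<xi> t)))"
    unfolding continuous_on_eq_continuous_within
  proof
    fix t :: real assume "t \<in> {0..}"
    show "continuous (at t within {0..}) (\<lambda>t. real_of_ereal (conjugate \<Theta> (\<xi> t)))"
    proof (rule continuous_within_compose3[where g = "\<lambda>\<zeta>. real_of_ereal (conjugate \<Theta> \<zeta>)"])
      show "isCont (\<lambda>\<zeta>. real_of_ereal (conjugate \<Theta> \<zeta>)) (\<xi> t)"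
        using flow_gradient \<open>t \<in> {0..}\<close> by (auto simp: is_gradient_def intro: has_derivative_continuous)
      show "continuous (at t within {0..}) \<xi>"
        using xi_continuous \<open>t \<in> {0..}\<close> by (simp add: continuous_on_eq_continuous_within)
    qed
  qed
  then have "continuous_on {0..}
      (\<lambda>t. real_of_ereal (\<Theta> xhat) + real_of_ereal (conjugate \<Theta> (\<xi> t)) - inner (\<xi> t) xhat)"
    by (intro continuous_intros xi_continuous)
  then show ?thesis by (rule continuous_on_eq) (simp add: \<phi>_conjugate_eq)
qed

lemma residual_continuous: "continuous_on {0..} residual"
  unfolding residual_def
  by (intro continuous_intros continuous_on_compose2[OF F_cont x_continuous]) (auto intro: flow_in_DF)

lemma \<phi>_derivative_le:
  assumes "0 < t" "x t \<in> cball x0 (2 * \<rho>)"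
  shows "\<exists>D. (\<phi> has_real_derivative D) (at t) \<and> D \<le> - (1 - \<eta>) * (residual t)\<^sup>2"
  using bregman_flow_derivative_le[of y 0, OF _ flow assms] unfolding \<phi>_def[abs_def] residual_def
  by simp

lemma \<phi>_start_le: "\<phi> 0 \<le> c0 * \<rho> powr p"
  using bregman_flow[of 0] xhat(2) by (simp add: flow_start)

lemma residual_square_continuous: "continuous_on {0..} (\<lambda>t. (residual t)\<^sup>2)"
  using residual_continuous by (intro continuous_intros)

lemma residual_square_integrable: "0 \<le> a \<Longrightarrow> (\<lambda>t. (residual t)\<^sup>2) integrable_on {a..b}"
  by (intro integrable_continuous_interval continuous_on_subset[OF residual_square_continuous]) auto

lemma energy_inequality:
  assumes "0 \<le> T" "x ` {0..T} \<subseteq> cball x0 (2 * \<rho>)"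
  shows "\<phi> T + (1 - \<eta>) * integral {0..T} (\<lambda>t. (residual t)\<^sup>2) \<le> \<phi> 0"
proof -
  let ?G = "\<lambda>t. (residual t)\<^sup>2"
  define \<psi> where "\<psi> t = \<phi> t + (1 - \<eta>) * integral {0..t} ?G" for t
  have G_cont: "continuous_on {0..T} ?G"
    using residual_square_continuous by (rule continuous_on_subset) auto
  have "continuous_on {0..T} \<psi>"
    unfolding \<psi>_def
    by (intro continuous_intros continuous_on_subset[OF \<phi>_continuous]
          indefinite_integral_continuous_1 integrable_continuous_real G_cont) auto
  moreover have "\<exists>D. (\<psi> has_real_derivative D) (at t) \<and> D \<le> 0" if "0 < t" "t < T" for t
  proof -
    have "x t \<in> cball x0 (2 * \<rho>)" using assms(2) that by (auto simp: image_subset_iff)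
    then obtain D where D: "(\<phi> has_real_derivative D) (at t)" "D \<le> - (1 - \<eta>) * ?G t"
      using \<phi>_derivative_le \<open>0 < t\<close> by blast
    have "((\<lambda>u. integral {0..u} ?G) has_real_derivative ?G t) (at t within {0..T})"
      using that by (intro integral_has_real_derivative G_cont) auto
    then have I: "((\<lambda>u. integral {0..u} ?G) has_real_derivative ?G t) (at t)"
      using that at_within_interior[of t "{0..T}"] by simp
    have "(\<psi> has_real_derivative D + (1 - \<eta>) * ?G t) (at t)"
      unfolding \<psi>_def by (intro derivative_intros DERIV_cmult D(1) I)
    then show ?thesis using D(2) by (intro exI[of _ "D + (1 - \<eta>) * ?G t"]) (simp add: algebra_simps)
  qed
  ultimately have "\<psi> T \<le> \<psi> 0"
    by (intro DERIV_nonpos_imp_decreasing_open[OF \<open>0 \<le> T\<close>]) auto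
  then show ?thesis by (simp add: \<psi>_def)
qed

lemma flow_in_open_ball:
  assumes "0 \<le> s" "x ` {0..s} \<subseteq> cball x0 (2 * \<rho>)"
  shows "x s \<in> ball x0 (2 * \<rho>)"
proof -
  let ?G = "\<lambda>t. (residual t)\<^sup>2"
  have "0 \<le> integral {0..s} ?G"
    by (rule integral_nonneg[OF residual_square_integrable]) simp_all
  then consider "integral {0..s} ?G = 0" | "0 < integral {0..s} ?G" by linarith
  then show ?thesis
  proof cases
    case 1
    \<comment> \<open>The residual vanishes on \<open>[0, s]\<close>, so \<open>\<xi>\<close> and with it \<open>x\<close> have not moved.\<close>
    have "x s = x0"
    proof (cases "s = 0")
      case False
      have "?G t = 0" if "t \<in> {0..s}" for t
        using has_integral_0_cbox_imp_0[of 0 s ?G t] continuous_on_subset[OF residual_square_continuous]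
          1 residual_square_integrable[of 0 s] \<open>0 \<le> s\<close> False that
        by (auto simp: has_integral_integral)
      then have "(\<xi> has_vector_derivative 0) (at t within {0..s})" if "t \<in> {0..s}" for t
        using flow_derivative[of t] that norm_blinfun_adjoint_le[of "L (x t)" 0]
        by (auto simp: residual_def intro: has_vector_derivative_within_subset)
      then have "0-lipschitz_on {0..s} \<xi>"
        by (intro lipschitz_on_vector_derivative_bound) auto
      then have "\<xi> s = \<xi> 0" using \<open>0 \<le> s\<close> by (auto dest: lipschitz_onD[of _ _ _ s 0])
      then have "dist (x s) (x 0) \<le> 0" using flow_holder[of s 0] holder_modulus(2) \<open>0 \<le> s\<close> by simp
      then show ?thesis by (simp add: flow_start)
    qed (simp add: flow_start)
    then show ?thesis using rho by simp
  next
    case 2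
    then have "\<phi> s < c0 * \<rho> powr p"
      using energy_inequality[OF assms] eta \<phi>_start_le by (smt (verit) mult_pos_pos)
    then have "norm (x s - xhat) < \<rho>"
      using p_convex_bregman_less_imp_norm_less[OF pconv c0 _ _ xhat_effdom flow_subdiff]
        bregman_flow \<open>0 \<le> s\<close> p rho by simp
    then show ?thesis
      using norm_x0_xhat_le norm_triangle_ineq[of "x0 - xhat" "xhat - x s"]
      by (simp add: dist_norm norm_minus_commute)
  qed
qed

lemma flow_stays_in_ball: "0 \<le> t \<Longrightarrow> x t \<in> cball x0 (2 * \<rho>)"
  using continuous_on_halfline_stays_in[OF x_continuous closed_cball open_ball ball_subset_cball]
    flow_in_open_ball flow_start rho by simp

lemma integral_residual_square_le:
  assumes "0 \<le> T"
  shows "integral {0..T} (\<lambda>t. (residual t)\<^sup>2) \<le> \<phi> 0 / (1 - \<eta>)"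
proof -
  have "x ` {0..T} \<subseteq> cball x0 (2 * \<rho>)" using flow_stays_in_ball by auto
  then have "(1 - \<eta>) * integral {0..T} (\<lambda>t. (residual t)\<^sup>2) \<le> \<phi> 0"
    using energy_inequality \<phi>_nonneg \<open>0 \<le> T\<close> by (smt (verit))
  then show ?thesis using eta by (simp add: pos_le_divide_eq mult.commute)
qed

lemma residual_le: "0 \<le> t \<Longrightarrow> residual t \<le> C0 / (1 - \<eta>) * (3 * \<rho>)"
proof -
  assume "0 \<le> t"
  have "residual t = dist (F (x t)) (F xhat)" by (simp add: residual_def dist_norm xhat(1))
  also have "\<dots> \<le> C0 / (1 - \<eta>) * dist (x t) xhat"
    by (rule lipschitz_onD[OF F_lipschitz])
      (use flow_stays_in_ball flow_effdom \<open>0 \<le> t\<close> xhat_in_ball xhat_effdom in auto)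
  also have "\<dots> \<le> C0 / (1 - \<eta>) * (3 * \<rho>)"
  proof (rule mult_left_mono)
    show "dist (x t) xhat \<le> 3 * \<rho>"
      using dist_triangle[of "x t" xhat x0] flow_stays_in_ball[OF \<open>0 \<le> t\<close>] norm_x0_xhat_le
      by (simp add: dist_norm norm_minus_commute)
    show "0 \<le> C0 / (1 - \<eta>)" using L_bound(1) eta(2) by simp
  qed
  finally show ?thesis .
qed

lemma xi_lipschitz: "(C0 * (C0 / (1 - \<eta>) * (3 * \<rho>)))-lipschitz_on {0..} \<xi>"
proof (rule lipschitz_on_vector_derivative_bound[OF convex_real_interval(1) flow_derivative])
  fix t :: real assume "t \<in> {0..}"
  have "norm (- adjoint (blinfun_apply (L (x t))) (F (x t) - y)) \<le> norm (L (x t)) * residual t"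
    using norm_blinfun_adjoint_le by (simp add: residual_def)
  also have "\<dots> \<le> C0 * (C0 / (1 - \<eta>) * (3 * \<rho>))"
    using L_bound flow_stays_in_ball residual_le \<open>t \<in> {0..}\<close>
    by (intro mult_mono) (auto simp: residual_def)
  finally show "norm (- adjoint (blinfun_apply (L (x t))) (F (x t) - y)) \<le> C0 * (C0 / (1 - \<eta>) * (3 * \<rho>))" .
qed (use L_bound(1) eta rho in auto)

lemma residual_square_uniformly_continuous: "uniformly_continuous_on {0..} (\<lambda>t. (residual t)\<^sup>2)"
proof -
  have "uniformly_continuous_on {0..} x"
    using flow_holder holder_modulus lipschitz_on_uniformly_continuous[OF xi_lipschitz]
    by (rule uniformly_continuous_on_modulus)
  moreover have "uniformly_continuous_on (x ` {0..}) F"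
    using F_lipschitz flow_stays_in_ball flow_effdom
    by (intro lipschitz_on_uniformly_continuous[OF lipschitz_on_subset]) auto
  ultimately have "uniformly_continuous_on {0..} (\<lambda>t. F (x t))" by (rule uniformly_continuous_on_compose)
  then have "uniformly_continuous_on {0..} residual"
    unfolding residual_def by (intro continuous_intros)
  then show ?thesis
    by (rule uniformly_continuous_on_power2) (use residual_le in \<open>auto simp: residual_def\<close>)
qed

theorem residual_square_nn_integral_le:
  "(\<integral>\<^sup>+ t\<in>{0..}. ennreal ((norm (F (x t) - y))\<^sup>2) \<partial>lborel)
     \<le> ennreal (real_of_ereal (bregman \<Theta> \<xi>0 xhat x0) / (1 - \<eta>))"
  using nn_integral_halfline_le[OF residual_square_continuous _ integral_residual_square_le]
  by (simp add: residual_def \<phi>_start)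

theorem residual_tendsto_0: "((\<lambda>t. norm (F (x t) - y)) \<longlongrightarrow> 0) at_top"
proof -
  have "((\<lambda>t. (residual t)\<^sup>2) \<longlongrightarrow> 0) at_top"
    using barbalat[OF residual_square_uniformly_continuous _ integral_residual_square_le] by simp
  then have "((\<lambda>t. sqrt ((residual t)\<^sup>2)) \<longlongrightarrow> sqrt 0) at_top" by (rule tendsto_real_sqrt)
  then show ?thesis by (simp add: residual_def)
qed

end

theorem proposition3p2:
  fixes \<Theta> :: "'a::{real_inner,complete_space} \<Rightarrow> ereal"
    and F :: "'a \<Rightarrow> 'b::{real_inner,complete_space}"
    and DF :: "'a set"
    and L :: "'a \<Rightarrow> ('a \<Rightarrow>\<^sub>L 'b)"
    and y :: 'b
    and p c0 \<rho> \<eta> C0 :: real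
    and x0 \<xi>0 xstar xhat :: 'a
  assumes p: "p > 1" and c0: "c0 > 0"
    and Theta_proper: "proper_fun \<Theta>"
    and Theta_wlsc: "weakly_lsc \<Theta>"
    and Theta_pconv: "p_convex \<Theta> p c0"
    and rho: "\<rho> > 0"
    and xi0: "\<xi>0 \<in> subdiff \<Theta> x0"
    and ball_DF: "cball x0 (2 * \<rho>) \<subseteq> DF"
    and xstar: "xstar \<in> DF" "F xstar = y" "xstar \<in> effdom \<Theta>"
               "bregman \<Theta> \<xi>0 xstar x0 \<le> ereal (c0 * \<rho> powr p)"
    and F_cont: "continuous_on DF F"
    and F_wclosed: "weakly_closed_on DF F"
    and L_cont: "continuous_on (cball x0 (2 * \<rho>) \<inter> effdom \<Theta>) L"
    and eta: "0 \<le> \<eta>" "\<eta> < 1"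
    and tcc: "\<And>x xb. x \<in> cball x0 (2 * \<rho>) \<inter> effdom \<Theta> \<Longrightarrow> xb \<in> cball x0 (2 * \<rho>) \<inter> effdom \<Theta> \<Longrightarrow>
                norm (F x - F xb - blinfun_apply (L xb) (x - xb)) \<le> \<eta> * norm (F x - F xb)"
    and C0: "C0 > 0" "\<And>x. x \<in> cball x0 (2 * \<rho>) \<Longrightarrow> norm (L x) \<le> C0"
    and xhat: "xhat \<in> DF" "F xhat = y"
              "bregman \<Theta> \<xi>0 xhat x0 \<le> ereal (c0 * \<rho> powr p)"
  shows
    "(\<forall>yd \<delta> \<xi>d xd T.
        norm (y - yd) \<le> \<delta> \<longrightarrow> flow_solution \<Theta> DF F L yd \<xi>0 x0 \<xi>d xd \<longrightarrow> T > 0 \<longrightarrow>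
        xd T \<in> cball x0 (2 * \<rho>) \<longrightarrow>
        (\<exists>D. ((\<lambda>t. real_of_ereal (bregman \<Theta> (\<xi>d t) xhat (xd t))) has_real_derivative D) (at T) \<and>
             D \<le> - (1 - \<eta>) * (norm (F (xd T) - yd))\<^sup>2 + \<delta> * (1 + \<eta>) * norm (F (xd T) - yd)))
     \<and>
     (\<forall>\<xi> x. flow_solution \<Theta> DF F L y \<xi>0 x0 \<xi> x \<longrightarrow>
        (\<integral>\<^sup>+ \<tau>\<in>{0..}. ennreal ((norm (F (x \<tau>) - y))\<^sup>2) \<partial>lborel)
           \<le> ennreal (real_of_ereal (bregman \<Theta> \<xi>0 xhat x0) / (1 - \<eta>))
        \<and> ((\<lambda>T. norm (F (x T) - y)) \<longlongrightarrow> 0) at_top)"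
  proof -
  \<comment> \<open>Weak closedness of \<open>F\<close>, continuity of \<open>L\<close>, \<open>xstar\<close> and \<open>cball x0 (2 * \<rho>) \<subseteq> DF\<close> only
    serve the existence of the flow, which is assumed here.\<close>
  interpret landweber_setting \<Theta> F L y p c0 \<rho> \<eta> C0 x0 \<xi>0 xhat
    using p c0 Theta_proper Theta_wlsc Theta_pconv rho eta tcc C0 xi0 xhat(2,3)
    by unfold_locales auto
  show ?thesis
  proof (intro conjI allI impI)
    fix yd \<delta> \<xi>d xd T
    assume "norm (y - yd) \<le> \<delta>" "flow_solution \<Theta> DF F L yd \<xi>0 x0 \<xi>d xd" "T > 0"
      "xd T \<in> cball x0 (2 * \<rho>)"
    then show "\<exists>D. ((\<lambda>t. real_of_ereal (bregman \<Theta> (\<xi>d t) xhat (xd t))) has_real_derivative D) (at T) \<and>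
        D \<le> - (1 - \<eta>) * (norm (F (xd T) - yd))\<^sup>2 + \<delta> * (1 + \<eta>) * norm (F (xd T) - yd)"
      by (rule bregman_flow_derivative_le)
  next
    fix \<xi> x assume "flow_solution \<Theta> DF F L y \<xi>0 x0 \<xi> x"
    then interpret exact_flow \<Theta> F L y p c0 \<rho> \<eta> C0 x0 \<xi>0 xhat DF \<xi> x
      using F_cont by unfold_locales
    show "(\<integral>\<^sup>+ \<tau>\<in>{0..}. ennreal ((norm (F (x \<tau>) - y))\<^sup>2) \<partial>lborel)
        \<le> ennreal (real_of_ereal (bregman \<Theta> \<xi>0 xhat x0) / (1 - \<eta>))"
      by (rule residual_square_nn_integral_le)
    show "((\<lambda>T. norm (F (x T) - y)) \<longlongrightarrow> 0) at_top"
      by (rule residual_tendsto_0)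
  qed
qed

end
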